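(* For every natural number $n \geq 2$, there exists a regular graph $G_n$ with $\chi(G_n) = n$ and $\chi_2(G_n) = 2\chi(G_n)$.
   Context: All graphs are finite and simple. A proper $k$-colouring of a graph $G$ is a map $c\colon V(G)\to[k]$ with $c(u)\neq c(v)$ for every edge $uv$; $\chi(G)$ is the chromatic number. For an integer $r\ge 1$, an $r$-dynamic $k$-colouring of $G$ is a proper $k$-colouring $c$ such that for every vertex $v$, the set $c(N(v))$ of colours used on the neighbourhood $N(v)$ has size at least $\min\{r, d(v)\}$, where $d(v)$ is the degree of $v$. The $r$-dynamic chromatic number $\chi_r(G)$ is the least $k$ such that $G$ has an $r$-dynamic $k$-colouring. In particular $\chi_2(G)$ (the dynamic chromatic number) is the least number of colours in a proper colouring in which the neighbourhood of every vertex of degree at least $2$ is not monochromatic. *)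

theory Defs
  imports Main
begin

definition simple_graph :: "'a set \<Rightarrow> ('a \<Rightarrow> 'a \<Rightarrow> bool) \<Rightarrow> bool" where
  "simple_graph V E \<longleftrightarrow> finite V \<and> (\<forall>u v. E u v \<longrightarrow> u \<in> V \<and> v \<in> V)
     \<and> (\<forall>u v. E u v \<longrightarrow> E v u) \<and> (\<forall>v. \<not> E v v)"

definition nbhd :: "'a set \<Rightarrow> ('a \<Rightarrow> 'a \<Rightarrow> bool) \<Rightarrow> 'a \<Rightarrow> 'a set" where
  "nbhd V E v = {u \<in> V. E v u}"

definition degree :: "'a set \<Rightarrow> ('a \<Rightarrow> 'a \<Rightarrow> bool) \<Rightarrow> 'a \<Rightarrow> nat" where
  "degree V E v = card (nbhd V E v)"

definition regular :: "'a set \<Rightarrow> ('a \<Rightarrow> 'a \<Rightarrow> bool) \<Rightarrow> bool" where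
  "regular V E \<longleftrightarrow> (\<exists>d. \<forall>v\<in>V. degree V E v = d)"

definition proper_colouring :: "'a set \<Rightarrow> ('a \<Rightarrow> 'a \<Rightarrow> bool) \<Rightarrow> nat \<Rightarrow> ('a \<Rightarrow> nat) \<Rightarrow> bool" where
  "proper_colouring V E k c \<longleftrightarrow> (\<forall>v\<in>V. c v \<in> {1..k}) \<and> (\<forall>u\<in>V. \<forall>v\<in>V. E u v \<longrightarrow> c u \<noteq> c v)"

definition chromatic_number :: "'a set \<Rightarrow> ('a \<Rightarrow> 'a \<Rightarrow> bool) \<Rightarrow> nat" where
  "chromatic_number V E = (LEAST k. \<exists>c. proper_colouring V E k c)"

definition r_dynamic_colouring :: "nat \<Rightarrow> 'a set \<Rightarrow> ('a \<Rightarrow> 'a \<Rightarrow> bool) \<Rightarrow> nat \<Rightarrow> ('a \<Rightarrow> nat) \<Rightarrow> bool" where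
  "r_dynamic_colouring r V E k c \<longleftrightarrow> proper_colouring V E k c \<and>
     (\<forall>v\<in>V. card (c ` nbhd V E v) \<ge> min r (degree V E v))"

definition r_dynamic_chromatic_number :: "nat \<Rightarrow> 'a set \<Rightarrow> ('a \<Rightarrow> 'a \<Rightarrow> bool) \<Rightarrow> nat" where
  "r_dynamic_chromatic_number r V E = (LEAST k. \<exists>c. r_dynamic_colouring r V E k c)"

end

theory Submission
  imports Defs "HOL-Library.FuncSet" "HOL-Library.Nat_Bijection" "HOL-Library.Countable"
begin

text \<open>Take \<open>t = 2n\<^sup>3\<close> blocks, each a complete \<open>n\<close>-partite graph with parts of size \<open>s\<close>, and for
  every \<open>n\<close>-set \<open>S\<close> of blocks and every \<open>i < n\<close> a hub vertex joined to part \<open>i\<close> of each block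
  in \<open>S\<close>. With \<open>s = C(t-1, n-1)\<close>, the number of hubs at a given part, the graph is
  \<open>ns\<close>-regular. Colouring part \<open>i\<close> with \<open>i\<close> and the hub \<open>(S, i)\<close> with \<open>i + 1 mod n\<close> is proper,
  and a block contains an \<open>n\<close>-clique, so \<open>\<chi> = n\<close>; a second palette on all but one vertex of each
  part makes this colouring dynamic with \<open>2n\<close> colours. Conversely, distinct parts of a block get
  disjoint colour sets, so under fewer than \<open>2n\<close> colours every block has a monochromatic part.
  By pigeonhole \<open>n\<close> blocks share the index and the colour of that part, and the hub over them
  sees a single colour.\<close>

lemma nbhd_subset: "nbhd V E v \<subseteq> V"
  by (auto simp: nbhd_def)

lemma r_dynamic_colouring_0: "r_dynamic_colouring 0 V E k c \<longleftrightarrow> proper_colouring V E k c"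
  by (simp add: r_dynamic_colouring_def)

lemma chromatic_number_eq_r_dynamic_0: "chromatic_number V E = r_dynamic_chromatic_number 0 V E"
  by (simp add: chromatic_number_def r_dynamic_chromatic_number_def r_dynamic_colouring_0)

lemma r_dynamic_colouring_cong:
  assumes "\<And>v. v \<in> V \<Longrightarrow> c v = c' v"
  shows "r_dynamic_colouring r V E k c \<longleftrightarrow> r_dynamic_colouring r V E k c'"
proof -
  have "c ` nbhd V E v = c' ` nbhd V E v" for v
    using assms nbhd_subset[of V E v] by (intro image_cong) auto
  then show ?thesis
    using assms by (simp add: r_dynamic_colouring_def proper_colouring_def)
qed

lemma r_dynamic_colouring_2I:
  assumes "finite V" "proper_colouring V E k c"
    and two_colours: "\<And>v. v \<in> V \<Longrightarrow> \<exists>u\<in>nbhd V E v. \<exists>w\<in>nbhd V E v. c u \<noteq> c w"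
  shows "r_dynamic_colouring 2 V E k c"
proof -
  have "2 \<le> card (c ` nbhd V E v)" if "v \<in> V" for v
  proof -
    obtain u w where "u \<in> nbhd V E v" "w \<in> nbhd V E v" "c u \<noteq> c w"
      using two_colours \<open>v \<in> V\<close> by blast
    moreover have "finite (c ` nbhd V E v)"
      using finite_subset[OF nbhd_subset \<open>finite V\<close>] by blast
    ultimately have "card {c u, c w} \<le> card (c ` nbhd V E v)"
      by (intro card_mono) auto
    then show ?thesis
      using \<open>c u \<noteq> c w\<close> by simp
  qed
  then show ?thesis
    using assms(2) by (auto simp: r_dynamic_colouring_def intro: min.coboundedI1)
qed

lemma card_clique_le_colours:
  assumes c: "proper_colouring V E k c" and "K \<subseteq> V"
    and clique: "\<And>u v. u \<in> K \<Longrightarrow> v \<in> K \<Longrightarrow> u \<noteq> v \<Longrightarrow> E u v"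
  shows "card K \<le> k"
proof -
  have "inj_on c K"
  proof (rule inj_onI)
    fix u v assume uv: "u \<in> K" "v \<in> K" "c u = c v"
    show "u = v"
    proof (rule ccontr)
      assume "u \<noteq> v"
      then have "E u v"
        using clique uv by blast
      moreover have "u \<in> V" "v \<in> V"
        using uv \<open>K \<subseteq> V\<close> by auto
      ultimately show False
        using c uv by (auto simp: proper_colouring_def)
    qed
  qed
  moreover have "c ` K \<subseteq> {1..k}"
    using c assms(2) by (auto simp: proper_colouring_def)
  ultimately have "card K \<le> card {1..k}"
    by (intro card_inj_on_le) auto
  then show ?thesis
    by simp
qed

lemma complete_multipartite_monochromatic_part:
  assumes c: "proper_colouring V E k c" and k: "k < 2 * n"
    and parts: "\<And>i. i < n \<Longrightarrow> P i \<subseteq> V"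
    and complete: "\<And>i j u v. i < n \<Longrightarrow> j < n \<Longrightarrow> i \<noteq> j \<Longrightarrow> u \<in> P i \<Longrightarrow> v \<in> P j \<Longrightarrow> E u v"
  shows "\<exists>i<n. \<forall>u\<in>P i. \<forall>v\<in>P i. c u = c v"
proof (rule ccontr)
  assume none: "\<not> (\<exists>i<n. \<forall>u\<in>P i. \<forall>v\<in>P i. c u = c v)"
  have colours: "c ` P i \<subseteq> {1..k}" if "i < n" for i
    using c parts[OF that] by (auto simp: proper_colouring_def)
  have two: "2 \<le> card (c ` P i)" if "i < n" for i
  proof -
    obtain u v where "u \<in> P i" "v \<in> P i" "c u \<noteq> c v"
      using none \<open>i < n\<close> by blast
    moreover have "finite (c ` P i)"
      using colours[OF \<open>i < n\<close>] finite_subset by blast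
    ultimately show ?thesis
      using card_mono[of "c ` P i" "{c u, c v}"] by auto
  qed
  have disjoint: "c ` P i \<inter> c ` P j = {}" if "i < n" "j < n" "i \<noteq> j" for i j
  proof -
    have "c u \<noteq> c v" if "u \<in> P i" "v \<in> P j" for u v
    proof -
      have "u \<in> V" "v \<in> V" "E u v"
        using parts complete \<open>i < n\<close> \<open>j < n\<close> \<open>i \<noteq> j\<close> that by auto
      then show ?thesis
        using c by (simp add: proper_colouring_def)
    qed
    then show ?thesis
      by blast
  qed
  have "2 * n \<le> (\<Sum>i<n. card (c ` P i))"
    using sum_mono[of "{..<n}" "\<lambda>_. 2" "\<lambda>i. card (c ` P i)"] two by simp
  also have "\<dots> = card (\<Union>i<n. c ` P i)"
  proof (rule card_UN_disjoint[symmetric])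
    show "\<forall>i\<in>{..<n}. finite (c ` P i)"
      using colours finite_subset by blast
    show "\<forall>i\<in>{..<n}. \<forall>j\<in>{..<n}. i \<noteq> j \<longrightarrow> c ` P i \<inter> c ` P j = {}"
      using disjoint by blast
  qed simp
  also have "\<dots> \<le> card {1..k}"
    using colours by (intro card_mono) auto
  finally show False
    using k by simp
qed

definition image_edges :: "('a \<Rightarrow> 'b) \<Rightarrow> 'a set \<Rightarrow> ('a \<Rightarrow> 'a \<Rightarrow> bool) \<Rightarrow> 'b \<Rightarrow> 'b \<Rightarrow> bool" where
  "image_edges f V E u w \<longleftrightarrow> (\<exists>x\<in>V. \<exists>y\<in>V. u = f x \<and> w = f y \<and> E x y)"

context
  fixes f :: "'a \<Rightarrow> 'b" and V :: "'a set" and E :: "'a \<Rightarrow> 'a \<Rightarrow> bool"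
  assumes inj: "inj_on f V"
begin

lemma nbhd_image_edges: "v \<in> V \<Longrightarrow> nbhd (f ` V) (image_edges f V E) (f v) = f ` nbhd V E v"
  using inj by (auto simp: nbhd_def image_edges_def inj_on_eq_iff)

lemma degree_image_edges: "v \<in> V \<Longrightarrow> degree (f ` V) (image_edges f V E) (f v) = degree V E v"
  unfolding degree_def nbhd_image_edges
  by (rule card_image[OF inj_on_subset[OF inj nbhd_subset]])

lemma simple_graph_image_edges: "simple_graph V E \<Longrightarrow> simple_graph (f ` V) (image_edges f V E)"
  using inj by (auto simp: simple_graph_def image_edges_def inj_on_eq_iff)

lemma regular_image_edges: "regular V E \<Longrightarrow> regular (f ` V) (image_edges f V E)"
  by (auto simp: regular_def degree_image_edges)

lemma r_dynamic_colouring_image_edges: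
  "r_dynamic_colouring r (f ` V) (image_edges f V E) k c \<longleftrightarrow> r_dynamic_colouring r V E k (c \<circ> f)"
  using inj
  by (auto simp: r_dynamic_colouring_def proper_colouring_def image_edges_def inj_on_eq_iff
      nbhd_image_edges degree_image_edges image_comp)

lemma r_dynamic_chromatic_number_image_edges:
  "r_dynamic_chromatic_number r (f ` V) (image_edges f V E) = r_dynamic_chromatic_number r V E"
proof -
  have "(\<exists>c. r_dynamic_colouring r V E k (c \<circ> f)) \<longleftrightarrow> (\<exists>c. r_dynamic_colouring r V E k c)" for k
  proof
    assume "\<exists>c. r_dynamic_colouring r V E k c"
    then obtain c where "r_dynamic_colouring r V E k c" ..
    moreover have "v \<in> V \<Longrightarrow> (c \<circ> inv_into V f \<circ> f) v = c v" for v
      using inj by simp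
    ultimately show "\<exists>c. r_dynamic_colouring r V E k (c \<circ> f)"
      using r_dynamic_colouring_cong by (metis comp_assoc)
  qed blast
  then show ?thesis
    by (simp add: r_dynamic_chromatic_number_def r_dynamic_colouring_image_edges)
qed

lemma chromatic_number_image_edges:
  "chromatic_number (f ` V) (image_edges f V E) = chromatic_number V E"
  by (simp add: chromatic_number_eq_r_dynamic_0 r_dynamic_chromatic_number_image_edges)

end

section \<open>The graph\<close>

lemma card_subsets_containing:
  assumes "finite A" "a \<in> A"
  shows "card {S. S \<subseteq> A \<and> card S = Suc m \<and> a \<in> S} = (card A - 1) choose m"
proof -
  have "{S. S \<subseteq> A \<and> card S = Suc m \<and> a \<in> S} = insert a ` {T. T \<subseteq> A - {a} \<and> card T = m}"
  proof (intro equalityI subsetI)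
    fix S assume S: "S \<in> {S. S \<subseteq> A \<and> card S = Suc m \<and> a \<in> S}"
    then have "S - {a} \<in> {T. T \<subseteq> A - {a} \<and> card T = m}"
      using assms(1) by (auto intro: finite_subset)
    then show "S \<in> insert a ` {T. T \<subseteq> A - {a} \<and> card T = m}"
      using S by (auto intro!: image_eqI[of _ _ "S - {a}"])
  next
    fix S assume "S \<in> insert a ` {T. T \<subseteq> A - {a} \<and> card T = m}"
    then obtain T where "S = insert a T" "T \<subseteq> A - {a}" "card T = m"
      by blast
    moreover have "finite T"
      using \<open>T \<subseteq> A - {a}\<close> assms(1) finite_subset by blast
    ultimately show "S \<in> {S. S \<subseteq> A \<and> card S = Suc m \<and> a \<in> S}"
      using assms(2) by (auto simp: card_insert_if)
  qed
  moreover have "inj_on (insert a) {T. T \<subseteq> A - {a} \<and> card T = m}"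
    by (rule inj_onI) (auto simp: insert_ident)
  ultimately show ?thesis
    using assms by (simp add: card_image n_subsets)
qed

lemma two_le_binomial: "0 < k \<Longrightarrow> k < m \<Longrightarrow> 2 \<le> m choose k"
proof -
  assume "0 < k" "k < m"
  then obtain m' k' where m_eq: "m = Suc m'" and k_eq: "k = Suc k'"
    by (metis gr0_implies_Suc less_imp_Suc_add)
  then have "m choose k = (m' choose k') + (m' choose Suc k')"
    by simp
  moreover have "0 < m' choose k'" "0 < m' choose Suc k'"
    using \<open>k < m\<close> m_eq k_eq by auto
  ultimately show ?thesis
    by linarith
qed

text \<open>The pigeonhole step needs more than \<open>n k (n - 1)\<close> blocks for every \<open>k < 2n\<close>.\<close>

definition num_blocks :: "nat \<Rightarrow> nat" where
  "num_blocks n = 2 * n ^ 3"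

definition part_size :: "nat \<Rightarrow> nat" where
  "part_size n = (num_blocks n - 1) choose (n - 1)"

definition hub_sets :: "nat \<Rightarrow> nat set set" where
  "hub_sets n = {S. S \<subseteq> {..<num_blocks n} \<and> card S = n}"

text \<open>\<open>Inl (a, i, x)\<close> is vertex \<open>x\<close> of part \<open>i\<close> of block \<open>a\<close>; \<open>Inr (S, i)\<close> is the hub over part \<open>i\<close>
  of the blocks in \<open>S\<close>.\<close>

type_synonym vertex = "(nat \<times> nat \<times> nat) + (nat set \<times> nat)"

definition G_vertices :: "nat \<Rightarrow> vertex set" where
  "G_vertices n = Inl ` ({..<num_blocks n} \<times> {..<n} \<times> {..<part_size n}) \<union> Inr ` (hub_sets n \<times> {..<n})"

fun G_adj :: "vertex \<Rightarrow> vertex \<Rightarrow> bool" where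
  "G_adj (Inl (a, i, _)) (Inl (b, j, _)) \<longleftrightarrow> a = b \<and> i \<noteq> j"
| "G_adj (Inl (a, i, _)) (Inr (S, j)) \<longleftrightarrow> a \<in> S \<and> i = j"
| "G_adj (Inr (S, j)) (Inl (a, i, _)) \<longleftrightarrow> a \<in> S \<and> i = j"
| "G_adj (Inr _) (Inr _) \<longleftrightarrow> False"

definition G_edges :: "nat \<Rightarrow> vertex \<Rightarrow> vertex \<Rightarrow> bool" where
  "G_edges n u v \<longleftrightarrow> u \<in> G_vertices n \<and> v \<in> G_vertices n \<and> G_adj u v"

lemma Inl_in_G_vertices [simp]:
  "Inl (a, i, x) \<in> G_vertices n \<longleftrightarrow> a < num_blocks n \<and> i < n \<and> x < part_size n"
  by (auto simp: G_vertices_def)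

lemma Inr_in_G_vertices [simp]: "Inr (S, i) \<in> G_vertices n \<longleftrightarrow> S \<in> hub_sets n \<and> i < n"
  by (auto simp: G_vertices_def)

lemma G_edges_cases:
  assumes "G_edges n u v"
  obtains (parts) a i x j y where "u = Inl (a, i, x)" "v = Inl (a, j, y)" "i \<noteq> j" "i < n" "j < n"
  | (part_hub) a i x S where "u = Inl (a, i, x)" "v = Inr (S, i)" "i < n"
  | (hub_part) a i x S where "u = Inr (S, i)" "v = Inl (a, i, x)" "i < n"
  using assms unfolding G_edges_def by (cases u; cases v) auto

lemma hub_sets_finite: "S \<in> hub_sets n \<Longrightarrow> finite S"
  by (auto simp: hub_sets_def intro: finite_subset)

lemma finite_hub_sets: "finite (hub_sets n)"
  by (rule finite_subset[of _ "Pow {..<num_blocks n}"]) (auto simp: hub_sets_def)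

lemma finite_G_vertices: "finite (G_vertices n)"
  by (simp add: G_vertices_def finite_hub_sets)

lemma simple_graph_G: "simple_graph (G_vertices n) (G_edges n)"
proof -
  have "G_adj u v \<longleftrightarrow> G_adj v u" "\<not> G_adj v v" for u v
    by (cases u; cases v; auto)+
  then show ?thesis
    using finite_G_vertices by (auto simp: simple_graph_def G_edges_def)
qed

lemma num_blocks_gt: "2 \<le> n \<Longrightarrow> n < num_blocks n - 1"
proof -
  assume "2 \<le> n"
  then have "n * 2 < n * (2 * n * n)"
    using mult_le_mono[of 2 n 2 n] by simp
  moreover have "num_blocks n = n * (2 * n * n)"
    by (simp add: num_blocks_def power3_eq_cube)
  ultimately show ?thesis
    using \<open>2 \<le> n\<close> by linarith
qed

lemma two_le_part_size: "2 \<le> n \<Longrightarrow> 2 \<le> part_size n"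
  unfolding part_size_def using num_blocks_gt[of n] by (intro two_le_binomial) auto

lemma nbhd_G_Inl:
  assumes "Inl (a, i, x) \<in> G_vertices n"
  shows "nbhd (G_vertices n) (G_edges n) (Inl (a, i, x)) =
    Inl ` ({a} \<times> ({..<n} - {i}) \<times> {..<part_size n}) \<union> Inr ` ({S \<in> hub_sets n. a \<in> S} \<times> {i})"
  using assms by (auto simp: nbhd_def G_edges_def elim: G_adj.elims)

lemma nbhd_G_Inr:
  assumes "Inr (S, i) \<in> G_vertices n"
  shows "nbhd (G_vertices n) (G_edges n) (Inr (S, i)) = Inl ` (S \<times> {i} \<times> {..<part_size n})"
  using assms by (auto simp: nbhd_def G_edges_def hub_sets_def elim: G_adj.elims)

lemma card_hubs_at_block:
  assumes "1 \<le> n" "a < num_blocks n"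
  shows "card {S \<in> hub_sets n. a \<in> S} = part_size n"
proof -
  have "{S \<in> hub_sets n. a \<in> S} = {S. S \<subseteq> {..<num_blocks n} \<and> card S = Suc (n - 1) \<and> a \<in> S}"
    using assms(1) by (auto simp: hub_sets_def)
  then show ?thesis
    using assms(2) by (simp add: card_subsets_containing part_size_def)
qed

lemma degree_G:
  assumes "2 \<le> n" "v \<in> G_vertices n"
  shows "degree (G_vertices n) (G_edges n) v = n * part_size n"
proof (cases v)
  case (Inl p)
  then obtain a i x where v: "v = Inl (a, i, x)"
    by (cases p) auto
  with assms have a: "a < num_blocks n" and "i < n"
    by auto
  have "card ({a} \<times> ({..<n} - {i}) \<times> {..<part_size n}) = (n - 1) * part_size n"
    using \<open>i < n\<close> by (simp add: card_cartesian_product)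
  moreover have "card ({S \<in> hub_sets n. a \<in> S} \<times> {i}) = card {S \<in> hub_sets n. a \<in> S}"
    by (simp add: card_cartesian_product)
  moreover have "finite ({S \<in> hub_sets n. a \<in> S} \<times> {i})"
    using finite_hub_sets by simp
  ultimately have "degree (G_vertices n) (G_edges n) v = (n - 1) * part_size n + card {S \<in> hub_sets n. a \<in> S}"
    unfolding degree_def v nbhd_G_Inl[OF assms(2)[unfolded v]]
    by (subst card_Un_disjoint) (auto simp: card_image)
  also have "\<dots> = (n - 1) * part_size n + part_size n"
    using assms(1) by (simp add: card_hubs_at_block[OF _ a])
  also have "\<dots> = n * part_size n"
    using assms(1) by (simp add: algebra_simps mult_eq_if)
  finally show ?thesis .
next
  case (Inr p)
  then obtain S i where v: "v = Inr (S, i)"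
    by (cases p) auto
  with assms have "S \<in> hub_sets n"
    by simp
  then have "finite S" "card S = n"
    by (auto simp: hub_sets_def intro: finite_subset)
  then show ?thesis
    unfolding degree_def v nbhd_G_Inr[OF assms(2)[unfolded v]]
    by (simp add: card_image card_cartesian_product)
qed

lemma regular_G: "2 \<le> n \<Longrightarrow> regular (G_vertices n) (G_edges n)"
  unfolding regular_def using degree_G by blast

section \<open>Colourings of the graph\<close>

definition hub_colour :: "nat \<Rightarrow> nat \<Rightarrow> nat" where
  "hub_colour n i = Suc i mod n + 1"

lemma hub_colour_neq: "2 \<le> n \<Longrightarrow> i < n \<Longrightarrow> hub_colour n i \<noteq> i + 1"
  by (cases "Suc i = n") (auto simp: hub_colour_def)

lemma hub_colour_range: "0 < n \<Longrightarrow> 0 < hub_colour n i \<and> hub_colour n i \<le> n"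
  by (simp add: hub_colour_def Suc_le_eq)

fun colour_G :: "nat \<Rightarrow> vertex \<Rightarrow> nat" where
  "colour_G n (Inl (_, i, _)) = i + 1"
| "colour_G n (Inr (_, i)) = hub_colour n i"

fun dynamic_colour_G :: "nat \<Rightarrow> vertex \<Rightarrow> nat" where
  "dynamic_colour_G n (Inl (_, i, x)) = (if x = 0 then i + 1 else n + i + 1)"
| "dynamic_colour_G n (Inr (_, i)) = hub_colour n i"

lemma proper_colouring_G: "2 \<le> n \<Longrightarrow> proper_colouring (G_vertices n) (G_edges n) n (colour_G n)"
  unfolding proper_colouring_def
proof (intro conjI ballI impI)
  fix v assume "2 \<le> n" "v \<in> G_vertices n"
  then show "colour_G n v \<in> {1..n}"
    using hub_colour_range[of n] by (cases v) (auto simp: Suc_le_eq)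
next
  fix u v assume "2 \<le> n" "G_edges n u v"
  from \<open>G_edges n u v\<close> show "colour_G n u \<noteq> colour_G n v"
    by (cases rule: G_edges_cases) (use hub_colour_neq[OF \<open>2 \<le> n\<close>] in fastforce)+
qed

lemma proper_colouring_dynamic_colour_G:
  assumes "2 \<le> n"
  shows "proper_colouring (G_vertices n) (G_edges n) (2 * n) (dynamic_colour_G n)"
proof -
  have hub_colour_bounds: "0 < hub_colour n i" "hub_colour n i \<le> n" "hub_colour n i \<le> 2 * n" for i
    using hub_colour_range[of n i] assms by simp_all
  show ?thesis
    unfolding proper_colouring_def
  proof (intro conjI ballI impI)
    fix v assume "v \<in> G_vertices n"
    then show "dynamic_colour_G n v \<in> {1..2 * n}"
      by (cases v) (auto simp: Suc_le_eq hub_colour_bounds)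
  next
    fix u v assume "G_edges n u v"
    then show "dynamic_colour_G n u \<noteq> dynamic_colour_G n v"
    proof (cases rule: G_edges_cases)
      case (part_hub a i x S)
      then show ?thesis
        using hub_colour_neq[OF assms, of i] hub_colour_bounds[of i] by auto
    next
      case (hub_part a i x S)
      then show ?thesis
        using hub_colour_neq[OF assms, of i] hub_colour_bounds[of i] by auto
    qed auto
  qed
qed

lemma dynamic_colour_G_nbhd:
  assumes "2 \<le> n" and v: "v \<in> G_vertices n"
  shows "\<exists>u\<in>nbhd (G_vertices n) (G_edges n) v. \<exists>w\<in>nbhd (G_vertices n) (G_edges n) v.
    dynamic_colour_G n u \<noteq> dynamic_colour_G n w"
proof -
  have two_parts: "1 < part_size n"
    using two_le_part_size[OF assms(1)] by simp
  show ?thesis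
  proof (cases v)
    case (Inl p)
    then obtain a i x where v_eq: "v = Inl (a, i, x)"
      by (cases p) auto
    define j where "j = (if i = 0 then 1 else 0 :: nat)"
    have "j < n" "j \<noteq> i"
      using assms(1) by (auto simp: j_def)
    then have "Inl (a, j, 0) \<in> nbhd (G_vertices n) (G_edges n) v"
        "Inl (a, j, 1) \<in> nbhd (G_vertices n) (G_edges n) v"
      using v two_parts unfolding v_eq nbhd_G_Inl[OF v[unfolded v_eq]] by auto
    moreover have "dynamic_colour_G n (Inl (a, j, 0)) \<noteq> dynamic_colour_G n (Inl (a, j, 1))"
      using assms(1) by simp
    ultimately show ?thesis
      by blast
  next
    case (Inr p)
    then obtain S i where v_eq: "v = Inr (S, i)"
      by (cases p) auto
    then have "card S = n"
      using v by (simp add: hub_sets_def)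
    then obtain b where "b \<in> S"
      using assms(1) by fastforce
    then have "Inl (b, i, 0) \<in> nbhd (G_vertices n) (G_edges n) v"
        "Inl (b, i, 1) \<in> nbhd (G_vertices n) (G_edges n) v"
      using two_parts unfolding v_eq nbhd_G_Inr[OF v[unfolded v_eq]] by auto
    moreover have "dynamic_colour_G n (Inl (b, i, 0)) \<noteq> dynamic_colour_G n (Inl (b, i, 1))"
      using assms(1) by simp
    ultimately show ?thesis
      by blast
  qed
qed

lemma r_dynamic_colouring_G:
  assumes "2 \<le> n"
  shows "r_dynamic_colouring 2 (G_vertices n) (G_edges n) (2 * n) (dynamic_colour_G n)"
  using finite_G_vertices proper_colouring_dynamic_colour_G[OF assms] dynamic_colour_G_nbhd[OF assms]
  by (rule r_dynamic_colouring_2I)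

lemma proper_colouring_G_ge:
  assumes "2 \<le> n" "proper_colouring (G_vertices n) (G_edges n) k c"
  shows "n \<le> k"
proof -
  have "0 < num_blocks n" "0 < part_size n"
    using num_blocks_gt[OF assms(1)] two_le_part_size[OF assms(1)] by auto
  have "card ((\<lambda>i. Inl (0, i, 0) :: vertex) ` {..<n}) \<le> k"
    by (rule card_clique_le_colours[OF assms(2)])
      (use \<open>0 < num_blocks n\<close> \<open>0 < part_size n\<close> in \<open>auto simp: G_edges_def\<close>)
  then show ?thesis
    by (simp add: card_image inj_on_def)
qed

lemma chromatic_number_G: "2 \<le> n \<Longrightarrow> chromatic_number (G_vertices n) (G_edges n) = n"
  unfolding chromatic_number_def
  by (rule Least_equality) (auto intro: proper_colouring_G proper_colouring_G_ge)

lemma pigeonhole_bound_lt_num_blocks: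
  assumes "0 < n" "k < 2 * n"
  shows "n * k * (n - 1) < num_blocks n"
proof -
  have "n * k * (n - 1) \<le> n * k * n"
    by simp
  also have "\<dots> < n * (2 * n) * n"
    using assms by simp
  finally show ?thesis
    by (simp add: num_blocks_def power3_eq_cube algebra_simps)
qed

lemma monochromatic_part_G:
  assumes proper: "proper_colouring (G_vertices n) (G_edges n) k c" and k: "k < 2 * n"
    and a: "a < num_blocks n"
  shows "\<exists>i<n. \<forall>x<part_size n. c (Inl (a, i, x)) = c (Inl (a, i, 0))"
proof -
  define part :: "nat \<Rightarrow> vertex set" where "part i = Inl ` ({a} \<times> {i} \<times> {..<part_size n})" for i
  have "\<exists>i<n. \<forall>u\<in>part i. \<forall>v\<in>part i. c u = c v"
    by (rule complete_multipartite_monochromatic_part[OF proper k])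
      (use a in \<open>auto simp: part_def G_edges_def\<close>)
  then obtain i where "i < n" and mono: "\<forall>u\<in>part i. \<forall>v\<in>part i. c u = c v"
    by blast
  have "c (Inl (a, i, x)) = c (Inl (a, i, 0))" if "x < part_size n" for x
    using mono[rule_format, of "Inl (a, i, x)" "Inl (a, i, 0)"] that by (simp add: part_def)
  with \<open>i < n\<close> show ?thesis
    by blast
qed

lemma hub_over_monochromatic_parts:
  assumes n: "2 \<le> n" and proper: "proper_colouring (G_vertices n) (G_edges n) k c" and k: "k < 2 * n"
  obtains S i col where "S \<in> hub_sets n" "i < n"
    "\<And>a x. a \<in> S \<Longrightarrow> x < part_size n \<Longrightarrow> c (Inl (a, i, x)) = col"
proof -
  obtain mono_part where mono_part: "\<And>a. a < num_blocks n \<Longrightarrow> mono_part a < n \<and>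
      (\<forall>x<part_size n. c (Inl (a, mono_part a, x)) = c (Inl (a, mono_part a, 0)))"
    using monochromatic_part_G[OF proper k] by metis
  define g where "g a = (mono_part a, c (Inl (a, mono_part a, 0)))" for a
  have s: "0 < part_size n"
    using two_le_part_size[OF n] by simp
  have "g a \<in> {..<n} \<times> {1..k}" if "a < num_blocks n" for a
  proof -
    have "mono_part a < n"
      using mono_part[OF that] by blast
    moreover from this have "Inl (a, mono_part a, 0) \<in> G_vertices n"
      using that s by simp
    ultimately show ?thesis
      using proper by (simp add: g_def proper_colouring_def)
  qed
  then have g: "g \<in> {..<num_blocks n} \<rightarrow> {..<n} \<times> {1..k}"
    by blast
  obtain q where q: "q \<in> {..<n} \<times> {1..k}"
    and fibre: "num_blocks n \<le> card (g -` {q} \<inter> {..<num_blocks n}) * card ({..<n} \<times> {1..k})"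
  proof -
    have "g 0 \<in> {..<n} \<times> {1..k}"
      using funcset_mem[OF g, of 0] num_blocks_gt[OF n] by simp
    then show thesis
      using pigeonhole_card[OF g] that by fastforce
  qed
  have card_colours: "card ({..<n} \<times> {1..k}) = n * k"
    by (simp add: card_cartesian_product)
  have "n * k * (n - 1) < n * k * card (g -` {q} \<inter> {..<num_blocks n})"
    using fibre[unfolded card_colours] pigeonhole_bound_lt_num_blocks[OF _ k] n
      mult.commute[of "card (g -` {q} \<inter> {..<num_blocks n})" "n * k"] by linarith
  then have "n \<le> card (g -` {q} \<inter> {..<num_blocks n})"
    by (simp only: mult_less_cancel1) linarith
  then obtain S where S: "S \<subseteq> g -` {q} \<inter> {..<num_blocks n}" "card S = n"
    by (meson obtain_subset_with_card_n)
  obtain i col where q_eq: "q = (i, col)" and "i < n"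
    using q by blast
  show thesis
  proof (rule that)
    show "S \<in> hub_sets n"
      using S by (auto simp: hub_sets_def)
    fix a x assume "a \<in> S" "x < part_size n"
    then have "a < num_blocks n" "mono_part a = i" "c (Inl (a, i, 0)) = col"
      using S by (auto simp: g_def q_eq)
    then show "c (Inl (a, i, x)) = col"
      using mono_part[of a] \<open>x < part_size n\<close> by metis
  qed (fact \<open>i < n\<close>)
qed

lemma r_dynamic_colouring_G_ge:
  assumes n: "2 \<le> n" and col: "r_dynamic_colouring 2 (G_vertices n) (G_edges n) k c"
  shows "2 * n \<le> k"
proof (rule ccontr)
  assume "\<not> 2 * n \<le> k"
  moreover have "proper_colouring (G_vertices n) (G_edges n) k c"
    using col by (simp add: r_dynamic_colouring_def)
  ultimately obtain S i col where "S \<in> hub_sets n" "i < n"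
    and mono: "\<And>a x. a \<in> S \<Longrightarrow> x < part_size n \<Longrightarrow> c (Inl (a, i, x)) = col"
    using hub_over_monochromatic_parts[OF n] by (metis not_le)
  then have hub: "Inr (S, i) \<in> G_vertices n"
    by simp
  have "c ` nbhd (G_vertices n) (G_edges n) (Inr (S, i)) \<subseteq> {col}"
    unfolding nbhd_G_Inr[OF hub] using mono by auto
  then have "card (c ` nbhd (G_vertices n) (G_edges n) (Inr (S, i))) \<le> card {col}"
    by (intro card_mono) simp_all
  moreover have "min 2 (degree (G_vertices n) (G_edges n) (Inr (S, i)))
      \<le> card (c ` nbhd (G_vertices n) (G_edges n) (Inr (S, i)))"
    using col hub by (simp add: r_dynamic_colouring_def)
  moreover have "2 \<le> degree (G_vertices n) (G_edges n) (Inr (S, i))"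
    using degree_G[OF n hub] mult_le_mono[OF n two_le_part_size[OF n]] by simp
  ultimately show False
    by simp
qed

lemma r_dynamic_chromatic_number_G:
  "2 \<le> n \<Longrightarrow> r_dynamic_chromatic_number 2 (G_vertices n) (G_edges n) = 2 * n"
  unfolding r_dynamic_chromatic_number_def
  by (rule Least_equality) (auto intro: r_dynamic_colouring_G r_dynamic_colouring_G_ge)

section \<open>A copy on the natural numbers\<close>

text \<open>Hubs are labelled by finite sets, which \<open>set_encode\<close> maps injectively into \<open>nat\<close>.\<close>

definition encode_vertex :: "vertex \<Rightarrow> nat" where
  "encode_vertex = to_nat \<circ> map_sum id (map_prod set_encode id)"

lemma inj_on_encode_vertex: "inj_on encode_vertex (G_vertices n)"
proof (rule inj_onI)
  fix u v assume "u \<in> G_vertices n" "v \<in> G_vertices n" "encode_vertex u = encode_vertex v"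
  then have "map_sum id (map_prod set_encode id) u = map_sum id (map_prod set_encode id) v"
    by (simp add: encode_vertex_def)
  with \<open>u \<in> G_vertices n\<close> \<open>v \<in> G_vertices n\<close> show "u = v"
    by (cases u; cases v) (auto simp: set_encode_eq hub_sets_finite)
qed

theorem theorem1p2:
  fixes n :: nat
  assumes "n \<ge> 2"
  shows "\<exists>(V :: nat set) E. simple_graph V E \<and> regular V E \<and>
           chromatic_number V E = n \<and>
           r_dynamic_chromatic_number 2 V E = 2 * chromatic_number V E"
proof (intro exI conjI)
  note inj = inj_on_encode_vertex[of n]
  let ?E = "image_edges encode_vertex (G_vertices n) (G_edges n)"
  show "simple_graph (encode_vertex ` G_vertices n) ?E"
    by (rule simple_graph_image_edges[OF inj simple_graph_G])
  show "regular (encode_vertex ` G_vertices n) ?E"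
    by (rule regular_image_edges[OF inj regular_G[OF assms]])
  show "chromatic_number (encode_vertex ` G_vertices n) ?E = n"
    using chromatic_number_image_edges[OF inj] chromatic_number_G[OF assms] by simp
  then show "r_dynamic_chromatic_number 2 (encode_vertex ` G_vertices n) ?E =
      2 * chromatic_number (encode_vertex ` G_vertices n) ?E"
    using r_dynamic_chromatic_number_image_edges[OF inj] r_dynamic_chromatic_number_G[OF assms]
    by simp
qed

end
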